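(* With $\partial_u=\frac qL\frac d{dq}$ and $Z:=L^5$, the following identities of $q$-series hold: $\partial_u\mathcal X_1=\mathcal X_2$, $\partial_u\mathcal X_2=\mathcal X_3$, $\partial_u(L^{-a}Z^b)=\frac15(5b-a)L^{-a}Z^bL^{-1}(Z-1)$, $$\partial_u\mathcal Y=-3\mathcal X_2-\mathcal Y^2-\mathcal X^2-\tfrac35L^{-2}Z(Z-1),$$ $$\partial_u\mathcal X_3=-4\mathcal X\mathcal X_3-3\mathcal X_2^2-6\mathcal X^2\mathcal X_2-\mathcal X^4-\tfrac35L^{-2}Z(Z-1)(\mathcal X^2+\mathcal X_2)-\tfrac3{25}L^{-3}Z(Z-1)(8Z-3)\mathcal X+\tfrac1{625}L^{-4}Z(-396Z^3+714Z^2-341Z+23),$$ where $\mathcal X=\mathcal X_1$. Consequently these formulas define a derivation $\partial_u$ of $\mathbf R$ which preserves $\mathbf R$, raises degree by $1$, and is compatible with $\frac qL\frac d{dq}$ under $Z=L^5$.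
   Context: $I(q,z)=z\sum_{d\ge0}q^d\prod_{k=1}^{5d}(5H+kz)/\prod_{k=1}^d(H+kz)^5$ with $H^4=0$, $I=zI_0+I_1H+z^{-1}I_2H^2+z^{-2}I_3H^3$; $I_{1,1}=1+q\frac d{dq}(I_1/I_0)$; $L=(1-5^5q)^{-1/5}$; $\mathcal X_k=\partial_u^k\log(I_0/L)$; $\mathcal Y=\partial_u\log(I_0I_{1,1}/L^2)$. $\mathbf R=\mathbb Q[\mathcal X_1,\mathcal X_2,\mathcal X_3,\mathcal Y]\otimes\mathrm{span}_{\mathbb Q}\{L^{-a}Z^b: a,b\ge0,\ b\le a\le 5b\}$ graded by $\deg L^{-1}=1$, $\deg\mathcal X_k=k$, $\deg\mathcal Y=1$, $\deg Z=0$. *)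

theory Defs
  imports "HOL-Computational_Algebra.Formal_Power_Series"
begin

text \<open>All q-series are formal power series in q (fps_X) over the rationals.\<close>

text \<open>Coefficient of H^j (with z = 1, by homogeneity) of the d-th summand of the I-function:
  the power series expansion in H at H = 0 of prod_{k=1}^{5d}(5H+k) / prod_{k=1}^{d}(H+k)^5.\<close>
definition Isummand :: "nat \<Rightarrow> rat fps" where
  "Isummand d = (\<Prod>k\<in>{1..5*d}. 5 * fps_X + fps_const (of_nat k))
      * inverse ((\<Prod>k\<in>{1..d}. fps_X + fps_const (of_nat k)) ^ 5)"

definition Icoeff :: "nat \<Rightarrow> rat fps" where
  "Icoeff j = Abs_fps (\<lambda>d. fps_nth (Isummand d) j)"

definition I0 :: "rat fps" where "I0 = Icoeff 0"
definition I1 :: "rat fps" where "I1 = Icoeff 1"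

definition qd :: "rat fps \<Rightarrow> rat fps" where "qd f = fps_X * fps_deriv f"

definition I11 :: "rat fps" where "I11 = 1 + qd (I1 * inverse I0)"

text \<open>L = (1 - 5^5 q)^(-1/5)\<close>
definition L :: "rat fps" where
  "L = Abs_fps (\<lambda>n. ((- 1 / 5) gchoose n) * (- (5 ^ 5)) ^ n)"

definition Zs :: "rat fps" where "Zs = L ^ 5"

definition du :: "rat fps \<Rightarrow> rat fps" where "du f = qd f * inverse L"

text \<open>partial_u log f, written as the logarithmic derivative (f has constant term 1)\<close>
definition dulog :: "rat fps \<Rightarrow> rat fps" where "dulog f = du f * inverse f"

text \<open>X_k = partial_u^k log(I0/L), for k \<ge> 1\<close>
definition Xc :: "nat \<Rightarrow> rat fps" where
  "Xc k = (du ^^ (k - 1)) (dulog (I0 * inverse L))"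

definition Yc :: "rat fps" where
  "Yc = dulog (I0 * I11 * inverse (L ^ 2))"

text \<open>Monomials X1^i X2^j X3^k Y^l L^{-a} Z^b (as q-series), admissible when b \<le> a \<le> 5b,
  of degree i + 2j + 3k + l + a.\<close>
type_synonym mon = "nat \<times> nat \<times> nat \<times> nat \<times> nat \<times> nat"

fun monval :: "mon \<Rightarrow> rat fps" where
  "monval (i, j, k, l, a, b) =
     Xc 1 ^ i * Xc 2 ^ j * Xc 3 ^ k * Yc ^ l * inverse L ^ a * Zs ^ b"

fun admissible :: "mon \<Rightarrow> bool" where
  "admissible (i, j, k, l, a, b) \<longleftrightarrow> b \<le> a \<and> a \<le> 5 * b"

fun mdeg :: "mon \<Rightarrow> nat" where
  "mdeg (i, j, k, l, a, b) = i + 2 * j + 3 * k + l + a"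

text \<open>Image in q-series of the degree-n part of R, and of R.\<close>
definition Rdeg :: "nat \<Rightarrow> rat fps set" where
  "Rdeg n = {f. \<exists>M c. finite M \<and> (\<forall>m\<in>M. admissible m \<and> mdeg m = n)
                   \<and> f = (\<Sum>m\<in>M. fps_const (c m) * monval m)}"

definition Rset :: "rat fps set" where
  "Rset = {f. \<exists>M c. finite M \<and> (\<forall>m\<in>M. admissible m)
                   \<and> f = (\<Sum>m\<in>M. fps_const (c m) * monval m)}"

end

(*
  Write \<theta> = q d/dq (here qd). The summands of the I-function satisfy a first-order recursion in d,
  which says that I satisfies the quintic Picard--Fuchs equation; its H^0- and H^1-parts are
  fourth-order equations for I0 and I1. The series L solves (1 - 5^5 q) L' = 625 L, so
  \<theta>L = L(Z - 1)/5, \<theta>Z = Z(Z - 1) and 5^5 q Z = Z - 1. With P_k = \<theta>^k I0 / I0 one has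
  X1 = L^-1 (P1 - (Z - 1)/5), and the Picard--Fuchs equation of I0 turns \<theta>P3 into a polynomial
  in P1, P2, P3, Z; this gives the formula for \<partial>_u X3. For Y one also needs Q_k = \<theta>^k I11 / I11:
  the equation of I1 = I0 (I1/I0) determines Q3, and then L^2 times the defect of the formula for
  \<partial>_u Y satisfies a linear equation \<theta>G = aG with a(0) = G(0) = 0, hence vanishes.
  Finally \<partial>_u is a derivation mapping every generator of R into R with degree raised by one.
*)

theory Submission
  imports Defs "HOL-Library.Product_Plus"
begin

unbundle fps_syntax

lemma qd_add [simp]: "qd (f + g) = qd f + qd g"
  by (simp add: qd_def algebra_simps)

lemma qd_diff [simp]: "qd (f - g) = qd f - qd g"
  by (simp add: qd_def algebra_simps)

lemma qd_uminus [simp]: "qd (- f) = - qd f"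
  by (simp add: qd_def)

lemma qd_mult [simp]: "qd (f * g) = qd f * g + f * qd g"
  by (simp add: qd_def algebra_simps)

lemma qd_fps_const [simp]: "qd (fps_const c) = 0"
  by (simp add: qd_def)

lemma qd_0 [simp]: "qd 0 = 0"
  and qd_1 [simp]: "qd 1 = 0"
  and qd_numeral [simp]: "qd (numeral k) = 0"
  by (simp_all add: qd_def)

lemma qd_power: "qd (f ^ n) = of_nat n * f ^ (n - 1) * qd f"
  by (simp add: qd_def fps_deriv_power' algebra_simps)

lemma qd_power_numeral [simp]: "qd (f ^ numeral k) = numeral k * f ^ pred_numeral k * qd f"
  using qd_power[of f "numeral k"] by (metis of_nat_numeral pred_numeral_def)

lemma qd_power_eigen: "qd f = c * f \<Longrightarrow> qd (f ^ n) = of_nat n * c * f ^ n"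
  by (induction n) (simp_all add: algebra_simps)

lemma qd_inverse: "f $ 0 \<noteq> 0 \<Longrightarrow> qd (inverse f) = - qd f * inverse f ^ 2"
  by (simp add: qd_def fps_inverse_deriv)

lemma qd_mult_inverse:
  "f $ 0 \<noteq> 0 \<Longrightarrow> qd (g * inverse f) = qd g * inverse f - (qd f * inverse f) * (g * inverse f)"
  by (simp add: qd_inverse power2_eq_square algebra_simps)

lemma qd_nth: "qd f $ n = of_nat n * f $ n"
  by (cases n) (simp_all add: qd_def)

lemma qd_nth_0 [simp]: "qd f $ 0 = 0"
  by (simp add: qd_nth)

lemmas qd_ring_simps = qd_0 qd_1 qd_numeral qd_fps_const qd_add qd_diff qd_uminus qd_mult
  qd_power_numeral pred_numeral_simps numeral_One BitM.simps

lemma du_mult: "du (f * g) = du f * g + f * du g"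
  and du_fps_const_mult: "du (fps_const c * f) = fps_const c * du f"
  and du_1: "du 1 = 0"
  by (simp_all add: du_def algebra_simps)

lemma du_sum: "du (sum h S) = (\<Sum>i\<in>S. du (h i))"
  by (induction S rule: infinite_finite_induct) (simp_all add: du_def algebra_simps)

text \<open>Uniqueness for the regular singular equation \<open>\<theta> G = a G\<close>: comparing coefficients gives
  \<open>n G\<^sub>n = \<Sum>\<^sub>i\<^sub>\<ge>\<^sub>1 a\<^sub>i G\<^sub>n\<^sub>-\<^sub>i\<close>.\<close>
lemma qd_eq_mult_imp_zero:
  assumes "qd G = a * G" and "a $ 0 = 0" and "G $ 0 = 0"
  shows "G = 0"
proof -
  have "G $ n = 0" for n
  proof (induction n rule: less_induct)
    case (less n)
    show ?case
    proof (cases n)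
      case 0
      then show ?thesis using assms(3) by simp
    next
      case (Suc m)
      have "of_nat n * G $ n = (\<Sum>i=0..n. a $ i * G $ (n - i))"
        using assms(1) by (simp add: fps_mult_nth flip: qd_nth)
      also have "\<dots> = 0"
      proof (intro sum.neutral ballI)
        fix i assume "i \<in> {0..n}"
        show "a $ i * G $ (n - i) = 0"
          using assms(2) less.IH[of "n - i"] Suc by (cases i) auto
      qed
      finally show ?thesis using Suc by simp
    qed
  qed
  then show ?thesis by (simp add: fps_ext)
qed

lemma binomial_series_ode:
  fixes a b :: "'a::field_char_0"
  shows "(1 + fps_const b * fps_X) * fps_deriv (Abs_fps (\<lambda>n. (a gchoose n) * b ^ n))
       = fps_const (a * b) * Abs_fps (\<lambda>n. (a gchoose n) * b ^ n)"
proof (rule fps_ext)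
  fix n
  have rec: "of_nat (Suc n) * (a gchoose Suc n) + of_nat n * (a gchoose n) = a * (a gchoose n)"
    using gbinomial_mult_1[of a n] by simp
  show "((1 + fps_const b * fps_X) * fps_deriv (Abs_fps (\<lambda>n. (a gchoose n) * b ^ n))) $ n
      = (fps_const (a * b) * Abs_fps (\<lambda>n. (a gchoose n) * b ^ n)) $ n"
  proof (cases n)
    case 0
    then show ?thesis using rec by (simp add: distrib_right mult.assoc)
  next
    case (Suc m)
    then have "((1 + fps_const b * fps_X) * fps_deriv (Abs_fps (\<lambda>n. (a gchoose n) * b ^ n))) $ n
        = b ^ Suc n * (of_nat (Suc n) * (a gchoose Suc n) + of_nat n * (a gchoose n))"
      by (simp add: distrib_right mult.assoc fps_X_mult_nth) (simp add: algebra_simps)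
    also have "\<dots> = b ^ Suc n * (a * (a gchoose n))"
      by (simp only: rec)
    finally show ?thesis
      by (simp add: algebra_simps)
  qed
qed

text \<open>Keeping \<open>1/5\<close> as an atom lets \<open>algebra\<close> use the single relation \<open>5 * fifth = 1\<close>.\<close>
abbreviation fifth :: "rat fps" where "fifth \<equiv> fps_const (1 / 5)"

lemma five_mult_fifth: "5 * fifth = 1"
  by (simp add: numeral_fps_const)

lemma L_nth_0 [simp]: "L $ 0 = 1"
  by (simp add: L_def)

lemma L_ode: "(1 - 3125 * fps_X) * fps_deriv L = 625 * L"
  using binomial_series_ode[of "- (5 ^ 5)" "- 1 / 5 :: rat"]
  by (simp add: L_def numeral_fps_const fps_const_neg[symmetric] del: fps_const_neg)

lemma Zs_nth_0 [simp]: "Zs $ 0 = 1"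
  by (simp add: Zs_def fps_nth_power_0)

lemma one_minus_X_mult_Zs: "(1 - 3125 * fps_X) * Zs = 1"
proof -
  define W where "W = (1 - 3125 * fps_X) * L ^ 5"
  have "fps_deriv W = 5 * L ^ 4 * ((1 - 3125 * fps_X) * fps_deriv L) - 3125 * L ^ 5"
    unfolding W_def by (simp add: fps_deriv_power' algebra_simps)
  also have "\<dots> = 0"
    unfolding L_ode by algebra
  finally have "W = fps_const (W $ 0)"
    by simp
  moreover have "W $ 0 = 1"
    unfolding W_def by (simp add: fps_nth_power_0)
  ultimately show ?thesis
    unfolding Zs_def W_def by simp
qed

lemma qd_L: "qd L = fifth * L * (Zs - 1)"
proof -
  have "fps_deriv L = Zs * ((1 - 3125 * fps_X) * fps_deriv L)"
    using one_minus_X_mult_Zs by algebra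
  then have "qd L = 625 * fps_X * Zs * L"
    unfolding L_ode qd_def by (simp add: algebra_simps)
  then show ?thesis
    using one_minus_X_mult_Zs five_mult_fifth by algebra
qed

lemma qd_Zs: "qd Zs = (Zs - 1) * Zs"
proof -
  have "qd Zs = 5 * L ^ 4 * qd L"
    unfolding Zs_def by (simp only: qd_ring_simps)
  then show ?thesis
    unfolding qd_L using five_mult_fifth Zs_def by algebra
qed

lemma L_mult_inverse_L: "L * inverse L = 1"
  by (simp add: inverse_mult_eq_1')

lemma qd_inverse_L: "qd (inverse L) = - fifth * (Zs - 1) * inverse L"
proof -
  have "qd (inverse L) = - qd L * inverse L ^ 2"
    by (simp add: qd_inverse)
  then show ?thesis
    unfolding qd_L using L_mult_inverse_L by algebra
qed

lemma du_inverse_L_power_Zs_power: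
  "du (inverse L ^ a * Zs ^ b)
     = fps_const ((5 * of_nat b - of_nat a) / 5) * inverse L ^ a * Zs ^ b * inverse L * (Zs - 1)"
proof -
  have coeff: "fps_const ((5 * of_nat b - of_nat a) / 5 :: rat) = of_nat b - of_nat a * fifth"
    by (simp add: field_simps flip: fps_of_nat)
  show ?thesis
    unfolding du_def qd_mult qd_power_eigen[OF qd_inverse_L] qd_power_eigen[OF qd_Zs] coeff
    by algebra
qed

lemma prod_atLeastAtMost_mult_Suc:
  "(\<Prod>k\<in>{1..m * Suc d}. f k) = (\<Prod>k\<in>{1..m * d}. f k) * (\<Prod>k\<in>{1..m}. f (m * d + k))"
proof -
  have "(\<Prod>k\<in>{1..m * d + m}. f k) = (\<Prod>k\<in>{1..m * d}. f k) * (\<Prod>k\<in>{m * d + 1..m * d + m}. f k)"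
    by (rule prod.ub_add_nat) simp
  also have "(\<Prod>k\<in>{m * d + 1..m * d + m}. f k) = (\<Prod>k\<in>{1..m}. f (m * d + k))"
    using prod.shift_bounds_cl_nat_ivl[of f 1 "m * d" m] by (simp add: add.commute)
  finally show ?thesis
    by (simp add: add.commute)
qed

lemma Isummand_Suc:
  "Isummand (Suc d) * (fps_X + fps_const (of_nat (Suc d))) ^ 4
     = 5 * Isummand d * (\<Prod>k\<in>{1..4}. 5 * fps_X + fps_const (of_nat (5 * d + k)))"
proof -
  define c where "c = fps_X + fps_const (of_nat (Suc d) :: rat)"
  define Q where "Q = (\<Prod>k\<in>{1..4}. 5 * fps_X + fps_const (of_nat (5 * d + k) :: rat))"
  define N where "N d = (\<Prod>k\<in>{1..5 * d}. 5 * fps_X + fps_const (of_nat k :: rat))" for d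
  define D where "D d = (\<Prod>k\<in>{1..d}. fps_X + fps_const (of_nat k :: rat))" for d
  have "{1..5::nat} = insert 5 {1..4}"
    by auto
  then have "N (Suc d) = N d * (Q * (5 * fps_X + fps_const (of_nat (5 * d + 5))))"
    unfolding N_def Q_def prod_atLeastAtMost_mult_Suc by simp
  also have "5 * fps_X + fps_const (of_nat (5 * d + 5)) = 5 * c"
    unfolding c_def by (simp add: numeral_fps_const algebra_simps flip: fps_const_mult fps_const_add)
  finally have N_Suc: "N (Suc d) = N d * Q * (5 * c)"
    by (simp only: ac_simps)
  have D_Suc: "D (Suc d) = D d * c"
    by (simp add: D_def c_def)
  have Isummand_N_D: "Isummand n = N n * inverse (D n ^ 5)" for n
    by (simp add: Isummand_def N_def D_def)
  have "c ^ 5 * inverse (c ^ 5) = 1"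
    by (simp add: c_def inverse_mult_eq_1' fps_nth_power_0)
  then have "Isummand (Suc d) * c ^ 4 = 5 * Isummand d * Q"
    unfolding Isummand_N_D N_Suc D_Suc power_mult_distrib fps_inverse_mult by algebra
  then show ?thesis
    by (simp only: c_def Q_def)
qed

lemma Isummand_coeff_rec:
  fixes d :: nat
  defines "x \<equiv> of_nat d :: rat"
  shows "Isummand (Suc d) $ 0 * (x + 1) ^ 4
           = Isummand d $ 0 * (3125 * x ^ 4 + 6250 * x ^ 3 + 4375 * x ^ 2 + 1250 * x + 120)"
    and "Isummand (Suc d) $ 1 * (x + 1) ^ 4 + 4 * (x + 1) ^ 3 * Isummand (Suc d) $ 0
           = Isummand d $ 1 * (3125 * x ^ 4 + 6250 * x ^ 3 + 4375 * x ^ 2 + 1250 * x + 120)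
             + Isummand d $ 0 * (12500 * x ^ 3 + 18750 * x ^ 2 + 8750 * x + 1250)"
proof -
  have "{1..4::nat} = {1, 2, 3, 4}"
    by auto
  then have rec: "Isummand (Suc d) * (fps_X + fps_const (x + 1)) ^ 4
      = 5 * Isummand d * ((5 * fps_X + fps_const (5 * x + 1)) * (5 * fps_X + fps_const (5 * x + 2))
          * (5 * fps_X + fps_const (5 * x + 3)) * (5 * fps_X + fps_const (5 * x + 4)))"
    using Isummand_Suc[of d] by (simp add: x_def add.commute mult.assoc)
  show "Isummand (Suc d) $ 0 * (x + 1) ^ 4
      = Isummand d $ 0 * (3125 * x ^ 4 + 6250 * x ^ 3 + 4375 * x ^ 2 + 1250 * x + 120)"
    using arg_cong[OF rec, of "\<lambda>f. f $ 0"]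
    by (simp add: fps_nth_power_0) (simp add: algebra_simps power2_eq_square power3_eq_cube power4_eq_xxxx)
  show "Isummand (Suc d) $ 1 * (x + 1) ^ 4 + 4 * (x + 1) ^ 3 * Isummand (Suc d) $ 0
      = Isummand d $ 1 * (3125 * x ^ 4 + 6250 * x ^ 3 + 4375 * x ^ 2 + 1250 * x + 120)
        + Isummand d $ 0 * (12500 * x ^ 3 + 18750 * x ^ 2 + 8750 * x + 1250)"
    using arg_cong[OF rec, of "\<lambda>f. f $ 1"] unfolding power4_eq_xxxx
    by (simp add: fps_numeral_nth) (simp add: algebra_simps power2_eq_square power3_eq_cube)
qed

lemma I0_nth: "I0 $ n = Isummand n $ 0"
  by (simp add: I0_def Icoeff_def)

lemma I1_nth: "I1 $ n = Isummand n $ 1"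
  by (simp add: I1_def Icoeff_def)

lemma I0_nth_0 [simp]: "I0 $ 0 = 1"
  by (simp add: I0_nth Isummand_def)

text \<open>The coefficients of \<open>H\<^sup>0\<close> and \<open>H\<^sup>1\<close> in the Picard--Fuchs equation
  \<open>(\<theta> + H)\<^sup>4 I = 5 q (5(\<theta> + H) + 1) \<cdots> (5(\<theta> + H) + 4) I\<close>.\<close>

lemma I0_picard_fuchs:
  "qd (qd (qd (qd I0))) = fps_X * (3125 * qd (qd (qd (qd I0))) + 6250 * qd (qd (qd I0))
     + 4375 * qd (qd I0) + 1250 * qd I0 + 120 * I0)" (is "?l = ?r")
proof (rule fps_ext)
  show "?l $ n = ?r $ n" for n
    using Isummand_coeff_rec(1)[of "n - 1"]
    by (cases n; simp add: qd_nth I0_nth numeral_fps_const;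
        simp add: algebra_simps power2_eq_square power3_eq_cube power4_eq_xxxx)
qed

lemma I1_picard_fuchs:
  "qd (qd (qd (qd I1))) + 4 * qd (qd (qd I0))
     = fps_X * (3125 * qd (qd (qd (qd I1))) + 6250 * qd (qd (qd I1)) + 4375 * qd (qd I1)
         + 1250 * qd I1 + 120 * I1
         + 12500 * qd (qd (qd I0)) + 18750 * qd (qd I0) + 8750 * qd I0 + 1250 * I0)" (is "?l = ?r")
proof (rule fps_ext)
  show "?l $ n = ?r $ n" for n
    using Isummand_coeff_rec(2)[of "n - 1"]
    by (cases n; simp add: qd_nth I0_nth I1_nth numeral_fps_const;
        simp add: algebra_simps power2_eq_square power3_eq_cube power4_eq_xxxx)
qed

lemma X_mult_Zs: "fps_X * Zs = fifth ^ 5 * (Zs - 1)"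
proof -
  have "3125 * fifth ^ 5 = (5 * fifth) ^ 5"
    by (simp add: power_mult_distrib)
  then show ?thesis
    using one_minus_X_mult_Zs five_mult_fifth by algebra
qed

lemma I0_picard_fuchs_Zs:
  "qd (qd (qd (qd I0))) = (Zs - 1) * (2 * qd (qd (qd I0)) + 7 * fifth * qd (qd I0)
     + 2 * fifth * qd I0 + 24 * fifth ^ 4 * I0)"
  using I0_picard_fuchs one_minus_X_mult_Zs X_mult_Zs five_mult_fifth by algebra

lemma I1_picard_fuchs_Zs:
  "qd (qd (qd (qd I1))) = (Zs - 1) * (2 * qd (qd (qd I1)) + 7 * fifth * qd (qd I1)
     + 2 * fifth * qd I1 + 24 * fifth ^ 4 * I1
     + 4 * qd (qd (qd I0)) + 6 * qd (qd I0) + 14 * fifth * qd I0 + 2 * fifth * I0)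
     - 4 * Zs * qd (qd (qd I0))"
  using I1_picard_fuchs one_minus_X_mult_Zs X_mult_Zs five_mult_fifth by algebra

definition P1 :: "rat fps" where "P1 = qd I0 * inverse I0"
definition P2 :: "rat fps" where "P2 = qd (qd I0) * inverse I0"
definition P3 :: "rat fps" where "P3 = qd (qd (qd I0)) * inverse I0"

lemma I0_mult_inverse: "I0 * inverse I0 = 1"
  by (simp add: inverse_mult_eq_1')

lemma qd_P1: "qd P1 = P2 - P1 * P1"
  and qd_P2: "qd P2 = P3 - P1 * P2"
  unfolding P1_def P2_def P3_def by (rule qd_mult_inverse, simp)+

lemma qd_P3: "qd P3 = (Zs - 1) * (2 * P3 + 7 * fifth * P2 + 2 * fifth * P1 + 24 * fifth ^ 4) - P1 * P3"
proof -
  have "qd P3 = qd (qd (qd (qd I0))) * inverse I0 - P1 * P3"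
    unfolding P1_def P3_def by (rule qd_mult_inverse) simp
  then show ?thesis
    unfolding I0_picard_fuchs_Zs P1_def P2_def P3_def using I0_mult_inverse by algebra
qed

lemma du_Xc_1: "du (Xc 1) = Xc 2"
  and du_Xc_2: "du (Xc 2) = Xc 3"
  by (simp_all add: Xc_def numeral_2_eq_2 numeral_3_eq_3)

lemma Xc_1_eq: "Xc 1 = inverse L * (P1 - fifth * (Zs - 1))"
proof -
  have "Xc 1 = qd (I0 * inverse L) * inverse L * (inverse I0 * L)"
    by (simp add: Xc_def dulog_def du_def fps_inverse_mult)
  then show ?thesis
    unfolding qd_mult qd_inverse_L P1_def using I0_mult_inverse L_mult_inverse_L by algebra
qed

lemmas qd_generator_rules = qd_P1 qd_P2 qd_P3 qd_inverse_L qd_Zs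

lemma fps_const_fifths: "fps_const (3 / 5) = 3 * fifth" "fps_const (3 / 25) = 3 * fifth ^ 2"
  "fps_const (1 / 625) = fifth ^ 4"
  by (simp_all add: numeral_fps_const power2_eq_square power4_eq_xxxx)

lemma du_Xc_3:
  "du (Xc 3) = - 4 * Xc 1 * Xc 3 - 3 * Xc 2 ^ 2 - 6 * Xc 1 ^ 2 * Xc 2 - Xc 1 ^ 4
     - fps_const (3 / 5) * inverse L ^ 2 * Zs * (Zs - 1) * (Xc 1 ^ 2 + Xc 2)
     - fps_const (3 / 25) * inverse L ^ 3 * Zs * (Zs - 1) * (8 * Zs - 3) * Xc 1
     + fps_const (1 / 625) * inverse L ^ 4 * Zs * (- 396 * Zs ^ 3 + 714 * Zs ^ 2 - 341 * Zs + 23)"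
  unfolding du_Xc_1[symmetric] du_Xc_2[symmetric] Xc_1_eq fps_const_fifths du_def
  using five_mult_fifth by (simp only: qd_ring_simps qd_generator_rules) algebra

definition Q1 :: "rat fps" where "Q1 = qd I11 * inverse I11"
definition Q2 :: "rat fps" where "Q2 = qd (qd I11) * inverse I11"
definition Q3 :: "rat fps" where "Q3 = qd (qd (qd I11)) * inverse I11"

lemma I11_nth_0 [simp]: "I11 $ 0 = 1"
  by (simp add: I11_def)

lemma I11_mult_inverse: "I11 * inverse I11 = 1"
  by (simp add: inverse_mult_eq_1')

lemma qd_Q1: "qd Q1 = Q2 - Q1 * Q1"
  and qd_Q2: "qd Q2 = Q3 - Q1 * Q2"
  unfolding Q1_def Q2_def Q3_def by (rule qd_mult_inverse, simp)+

text \<open>Expand \<open>\<theta>\<^sup>4 (I0 J)\<close>, \<open>J = I1 / I0\<close>, by Leibniz in the Picard--Fuchs equation of \<open>I1\<close>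
  and divide by \<open>I0 I11\<close>, using \<open>\<theta> J = I11 - 1\<close>.\<close>
lemma Q3_eq:
  "Q3 = (Zs - 1) * (2 * Q2 + 7 * fifth * Q1 + 2 * fifth + 6 * P2 + 14 * fifth * P1 + 6 * P1 * Q1)
     - 4 * P3 - 6 * P2 * Q1 - 4 * P1 * Q2"
proof -
  define J where "J = I1 * inverse I0"
  have I1_eq: "I1 = I0 * J"
    unfolding J_def using I0_mult_inverse by algebra
  have qd_J: "qd J = I11 - 1"
    by (simp add: I11_def J_def)
  have "qd (qd (qd (qd (I0 * J)))) = (Zs - 1) * (2 * qd (qd (qd (I0 * J))) + 7 * fifth * qd (qd (I0 * J))
     + 2 * fifth * qd (I0 * J) + 24 * fifth ^ 4 * (I0 * J)
     + 4 * qd (qd (qd I0)) + 6 * qd (qd I0) + 14 * fifth * qd I0 + 2 * fifth * I0)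
     - 4 * Zs * qd (qd (qd I0))"
    using I1_picard_fuchs_Zs unfolding I1_eq .
  then have "I0 * I11 * (Q3 - ((Zs - 1) * (2 * Q2 + 7 * fifth * Q1 + 2 * fifth + 6 * P2
      + 14 * fifth * P1 + 6 * P1 * Q1) - 4 * P3 - 6 * P2 * Q1 - 4 * P1 * Q2)) = 0"
    unfolding P1_def P2_def P3_def Q1_def Q2_def Q3_def
    using I0_picard_fuchs_Zs I0_mult_inverse I11_mult_inverse
    by (simp only: qd_ring_simps qd_J) algebra
  moreover have "I0 \<noteq> 0" and "I11 \<noteq> 0"
    using I0_nth_0 I11_nth_0 by (metis fps_zero_nth zero_neq_one)+
  ultimately show ?thesis
    by simp
qed

text \<open>The left-hand side is \<open>L\<^sup>2\<close> times the difference of the two sides of the identity \<open>du_Yc\<close> below.\<close>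
lemma I0_I11_relation:
  "Q2 + (1 - Zs) * Q1 + 2 * P1 * Q1 + 4 * P2 - 2 * P1 ^ 2 + 2 * (1 - Zs) * P1 + 2 * fifth * (1 - Zs) = 0"
    (is "?G = 0")
proof (rule qd_eq_mult_imp_zero)
  show "qd ?G = (Zs - 1 - 2 * P1 - Q1) * ?G"
    using five_mult_fifth by (simp only: qd_ring_simps qd_generator_rules qd_Q1 qd_Q2 Q3_eq) algebra
  show "(Zs - 1 - 2 * P1 - Q1) $ 0 = 0" and "?G $ 0 = 0"
    by (simp_all add: P1_def P2_def Q1_def Q2_def fps_numeral_nth)
qed

lemma Yc_eq: "Yc = inverse L * (P1 + Q1 - 2 * fifth * (Zs - 1))"
proof -
  have "Yc = qd (I0 * I11 * inverse L ^ 2) * inverse L * (inverse I0 * inverse I11 * L ^ 2)"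
    by (simp add: Yc_def dulog_def du_def fps_inverse_mult fps_inverse_power)
  then show ?thesis
    unfolding qd_ring_simps qd_inverse_L P1_def Q1_def
    using I0_mult_inverse I11_mult_inverse L_mult_inverse_L by algebra
qed

lemma du_Yc:
  "du Yc = - 3 * Xc 2 - Yc ^ 2 - Xc 1 ^ 2 - fps_const (3 / 5) * inverse L ^ 2 * Zs * (Zs - 1)"
  unfolding du_Xc_1[symmetric] Yc_eq Xc_1_eq fps_const_fifths du_def
  using I0_I11_relation five_mult_fifth
  by (simp only: qd_ring_simps qd_generator_rules qd_Q1) algebra

definition mon_span :: "(mon \<Rightarrow> bool) \<Rightarrow> rat fps set" where
  "mon_span P = {f. \<exists>M c. finite M \<and> (\<forall>m\<in>M. P m) \<and> f = (\<Sum>m\<in>M. fps_const (c m) * monval m)}"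

lemma Rdeg_eq_mon_span: "Rdeg n = mon_span (\<lambda>m. admissible m \<and> mdeg m = n)"
  unfolding Rdeg_def mon_span_def by simp

lemma Rset_eq_mon_span: "Rset = mon_span admissible"
  unfolding Rset_def mon_span_def by simp

lemma mon_span_sum_monval:
  "finite M \<Longrightarrow> (\<And>m. m \<in> M \<Longrightarrow> P m) \<Longrightarrow> (\<Sum>m\<in>M. fps_const (c m) * monval m) \<in> mon_span P"
  unfolding mon_span_def by blast

lemma mon_span_mono: "f \<in> mon_span P \<Longrightarrow> (\<And>m. P m \<Longrightarrow> Q m) \<Longrightarrow> f \<in> mon_span Q"
  unfolding mon_span_def by blast

lemma zero_in_mon_span: "0 \<in> mon_span P"
  using mon_span_sum_monval[of "{}"] by simp

lemma monval_in_mon_span: "P m \<Longrightarrow> monval m \<in> mon_span P"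
  using mon_span_sum_monval[of "{m}" P "\<lambda>_. 1"] by simp

lemma mon_span_fps_const_mult: "f \<in> mon_span P \<Longrightarrow> fps_const r * f \<in> mon_span P"
proof -
  assume "f \<in> mon_span P"
  then obtain M c where M: "finite M" "\<forall>m\<in>M. P m" "f = (\<Sum>m\<in>M. fps_const (c m) * monval m)"
    unfolding mon_span_def by blast
  then have "fps_const r * f = (\<Sum>m\<in>M. fps_const (r * c m) * monval m)"
    by (simp add: sum_distrib_left flip: mult.assoc fps_const_mult)
  then show ?thesis
    using M by (simp add: mon_span_sum_monval)
qed

lemma mon_span_add: "f \<in> mon_span P \<Longrightarrow> g \<in> mon_span P \<Longrightarrow> f + g \<in> mon_span P"
proof -
  assume "f \<in> mon_span P" "g \<in> mon_span P"
  then obtain M1 c1 M2 c2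
    where M1: "finite M1" "\<forall>m\<in>M1. P m" "f = (\<Sum>m\<in>M1. fps_const (c1 m) * monval m)"
      and M2: "finite M2" "\<forall>m\<in>M2. P m" "g = (\<Sum>m\<in>M2. fps_const (c2 m) * monval m)"
    unfolding mon_span_def by blast
  define c where "c m = (if m \<in> M1 then c1 m else 0) + (if m \<in> M2 then c2 m else 0)" for m
  have "f = (\<Sum>m\<in>M1 \<union> M2. fps_const (if m \<in> M1 then c1 m else 0) * monval m)"
    unfolding M1(3) using M1(1) M2(1) by (intro sum.mono_neutral_cong_left) auto
  moreover have "g = (\<Sum>m\<in>M1 \<union> M2. fps_const (if m \<in> M2 then c2 m else 0) * monval m)"
    unfolding M2(3) using M1(1) M2(1) by (intro sum.mono_neutral_cong_left) auto
  ultimately have "f + g = (\<Sum>m\<in>M1 \<union> M2. fps_const (c m) * monval m)"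
    by (simp add: c_def sum.distrib[symmetric] distrib_right flip: fps_const_add)
  also have "\<dots> \<in> mon_span P"
    using M1 M2 by (intro mon_span_sum_monval) auto
  finally show ?thesis .
qed

lemma mon_span_sum: "(\<And>i. i \<in> S \<Longrightarrow> h i \<in> mon_span P) \<Longrightarrow> sum h S \<in> mon_span P"
  by (induction S rule: infinite_finite_induct) (auto intro: zero_in_mon_span mon_span_add)

lemma mon_span_uminus: "f \<in> mon_span P \<Longrightarrow> - f \<in> mon_span P"
  using mon_span_fps_const_mult[of f P "- 1"] by (simp flip: fps_const_neg)

lemma mon_span_diff: "f \<in> mon_span P \<Longrightarrow> g \<in> mon_span P \<Longrightarrow> f - g \<in> mon_span P"
  using mon_span_add[of f P "- g"] mon_span_uminus[of g P] by simp

lemma monval_add: "monval (m + m') = monval m * monval m'"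
  by (cases m, cases m') (simp add: power_add ac_simps)

lemma mon_span_mult:
  assumes "f \<in> mon_span P" and "g \<in> mon_span Q" and "\<And>m m'. P m \<Longrightarrow> Q m' \<Longrightarrow> S (m + m')"
  shows "f * g \<in> mon_span S"
proof -
  obtain M c M' c'
    where M: "finite M" "\<forall>m\<in>M. P m" "f = (\<Sum>m\<in>M. fps_const (c m) * monval m)"
      and M': "finite M'" "\<forall>m\<in>M'. Q m" "g = (\<Sum>m\<in>M'. fps_const (c' m) * monval m)"
    using assms(1,2) unfolding mon_span_def by blast
  have "f * g = (\<Sum>m\<in>M. \<Sum>m'\<in>M'. fps_const (c m * c' m') * monval (m + m'))"
    unfolding M(3) M'(3) sum_product monval_add by (simp add: ac_simps)
  also have "\<dots> \<in> mon_span S"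
    using M M' assms(3) by (intro mon_span_sum mon_span_fps_const_mult monval_in_mon_span) auto
  finally show ?thesis .
qed

lemma du_mon_span:
  assumes "f \<in> mon_span P" and "\<And>m. P m \<Longrightarrow> du (monval m) \<in> mon_span Q"
  shows "du f \<in> mon_span Q"
proof -
  obtain M c where M: "finite M" "\<forall>m\<in>M. P m" "f = (\<Sum>m\<in>M. fps_const (c m) * monval m)"
    using assms(1) unfolding mon_span_def by blast
  have "du f = (\<Sum>m\<in>M. fps_const (c m) * du (monval m))"
    unfolding M(3) du_sum du_fps_const_mult ..
  also have "\<dots> \<in> mon_span Q"
    using M(2) assms(2) by (intro mon_span_sum mon_span_fps_const_mult) auto
  finally show ?thesis .
qed

lemma admissible_add: "admissible m \<Longrightarrow> admissible m' \<Longrightarrow> admissible (m + m')"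
  and mdeg_add: "mdeg (m + m') = mdeg m + mdeg m'"
  by (cases m, cases m', simp)+

lemma Rdeg_mult: "f \<in> Rdeg n \<Longrightarrow> g \<in> Rdeg k \<Longrightarrow> n + k = d \<Longrightarrow> f * g \<in> Rdeg d"
  unfolding Rdeg_eq_mon_span by (erule mon_span_mult, assumption) (auto simp: admissible_add mdeg_add)

lemma Rdeg_add: "f \<in> Rdeg n \<Longrightarrow> g \<in> Rdeg n \<Longrightarrow> f + g \<in> Rdeg n"
  and Rdeg_diff: "f \<in> Rdeg n \<Longrightarrow> g \<in> Rdeg n \<Longrightarrow> f - g \<in> Rdeg n"
  and Rdeg_uminus: "f \<in> Rdeg n \<Longrightarrow> - f \<in> Rdeg n"
  unfolding Rdeg_eq_mon_span by (auto intro: mon_span_add mon_span_diff mon_span_uminus)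

lemma zero_in_Rdeg: "0 \<in> Rdeg n"
  unfolding Rdeg_eq_mon_span by (rule zero_in_mon_span)

lemma monval_in_Rdeg: "admissible m \<Longrightarrow> monval m \<in> Rdeg (mdeg m)"
  unfolding Rdeg_eq_mon_span by (rule monval_in_mon_span) simp

lemma fps_const_in_Rdeg_0: "fps_const c \<in> Rdeg 0"
  using mon_span_fps_const_mult[OF monval_in_Rdeg[of "(0, 0, 0, 0, 0, 0)", unfolded Rdeg_eq_mon_span]]
  by (simp add: Rdeg_eq_mon_span)

lemma numeral_in_Rdeg_0: "numeral k \<in> Rdeg 0"
  using fps_const_in_Rdeg_0[of "numeral k"] by (simp add: numeral_fps_const)

lemma Rdeg_power: "f \<in> Rdeg n \<Longrightarrow> k * n = d \<Longrightarrow> f ^ k \<in> Rdeg d"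
proof (induction k arbitrary: d)
  case 0
  then show ?case
    using fps_const_in_Rdeg_0[of 1] by simp
next
  case (Suc k)
  then show ?case
    by (auto intro: Rdeg_mult)
qed

lemma Xc_in_Rdeg: "Xc 1 \<in> Rdeg 1" "Xc 2 \<in> Rdeg 2" "Xc 3 \<in> Rdeg 3"
  and Yc_in_Rdeg: "Yc \<in> Rdeg 1"
  using monval_in_Rdeg[of "(1, 0, 0, 0, 0, 0)"] monval_in_Rdeg[of "(0, 1, 0, 0, 0, 0)"]
    monval_in_Rdeg[of "(0, 0, 1, 0, 0, 0)"] monval_in_Rdeg[of "(0, 0, 0, 1, 0, 0)"]
  by (simp_all add: numeral_2_eq_2)

lemma inverse_L_power_Zs_power_in_Rdeg:
  "b \<le> a \<Longrightarrow> a \<le> 5 * b \<Longrightarrow> inverse L ^ a * Zs ^ b \<in> Rdeg a"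
  using monval_in_Rdeg[of "(0, 0, 0, 0, a, b)"] by simp

lemmas Rdeg_intros = inverse_L_power_Zs_power_in_Rdeg Xc_in_Rdeg Yc_in_Rdeg
  fps_const_in_Rdeg_0 numeral_in_Rdeg_0 Rdeg_add Rdeg_diff Rdeg_uminus Rdeg_mult Rdeg_power

lemma du_Xc_3_in_Rdeg: "du (Xc 3) \<in> Rdeg 4"
proof -
  have "du (Xc 3) = - 4 * Xc 1 * Xc 3 - 3 * Xc 2 ^ 2 - 6 * Xc 1 ^ 2 * Xc 2 - Xc 1 ^ 4
     - fps_const (3 / 5) * (inverse L ^ 2 * Zs ^ 2 - inverse L ^ 2 * Zs ^ 1) * (Xc 1 ^ 2 + Xc 2)
     - fps_const (3 / 25) * (8 * (inverse L ^ 3 * Zs ^ 3) - 11 * (inverse L ^ 3 * Zs ^ 2)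
         + 3 * (inverse L ^ 3 * Zs ^ 1)) * Xc 1
     + fps_const (1 / 625) * (- 396 * (inverse L ^ 4 * Zs ^ 4) + 714 * (inverse L ^ 4 * Zs ^ 3)
         - 341 * (inverse L ^ 4 * Zs ^ 2) + 23 * (inverse L ^ 4 * Zs ^ 1))"
    unfolding du_Xc_3 by algebra
  also have "\<dots> \<in> Rdeg 4"
    by (rule Rdeg_intros | simp)+
  finally show ?thesis .
qed

lemma du_Yc_in_Rdeg: "du Yc \<in> Rdeg 2"
proof -
  have "du Yc = - 3 * Xc 2 - Yc ^ 2 - Xc 1 ^ 2
      - fps_const (3 / 5) * (inverse L ^ 2 * Zs ^ 2 - inverse L ^ 2 * Zs ^ 1)"
    unfolding du_Yc by algebra
  also have "\<dots> \<in> Rdeg 2"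
    by (rule Rdeg_intros | simp)+
  finally show ?thesis .
qed

lemma du_inverse_L_power_Zs_power_in_Rdeg:
  assumes "b \<le> a" and "a \<le> 5 * b"
  shows "du (inverse L ^ a * Zs ^ b) \<in> Rdeg (Suc a)"
proof (cases "a = 5 * b")
  case True
  then show ?thesis
    using zero_in_Rdeg by (simp add: du_inverse_L_power_Zs_power)
next
  case False
  have "du (inverse L ^ a * Zs ^ b) = fps_const ((5 * of_nat b - of_nat a) / 5)
      * (inverse L ^ Suc a * Zs ^ Suc b - inverse L ^ Suc a * Zs ^ b)"
    unfolding du_inverse_L_power_Zs_power by (simp only: power_Suc) algebra
  also have "\<dots> \<in> Rdeg (Suc a)"
    using assms False
    by (intro Rdeg_mult[OF fps_const_in_Rdeg_0 _ add_0_left] Rdeg_diff inverse_L_power_Zs_power_in_Rdeg)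
      auto
  finally show ?thesis .
qed

definition du_homogeneous :: "nat \<Rightarrow> rat fps \<Rightarrow> bool" where
  "du_homogeneous n f \<longleftrightarrow> f \<in> Rdeg n \<and> du f \<in> Rdeg (Suc n)"

lemma du_homogeneous_mult:
  assumes "du_homogeneous n f" and "du_homogeneous k g"
  shows "du_homogeneous (n + k) (f * g)"
proof -
  have "f \<in> Rdeg n" "du f \<in> Rdeg (Suc n)" "g \<in> Rdeg k" "du g \<in> Rdeg (Suc k)"
    using assms unfolding du_homogeneous_def by auto
  then have "f * g \<in> Rdeg (n + k)" and "du f * g + f * du g \<in> Rdeg (Suc (n + k))"
    by (auto intro!: Rdeg_add elim!: Rdeg_mult)
  then show ?thesis
    unfolding du_homogeneous_def du_mult ..
qed

lemma du_homogeneous_power: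
  assumes "du_homogeneous n f"
  shows "du_homogeneous (k * n) (f ^ k)"
proof (induction k)
  case 0
  show ?case
    using fps_const_in_Rdeg_0[of 1] zero_in_Rdeg by (simp add: du_homogeneous_def du_1)
next
  case (Suc k)
  then show ?case
    using du_homogeneous_mult[OF assms] by simp
qed

lemma du_homogeneous_generators:
  "du_homogeneous 1 (Xc 1)" "du_homogeneous 2 (Xc 2)" "du_homogeneous 3 (Xc 3)" "du_homogeneous 1 Yc"
  "b \<le> a \<Longrightarrow> a \<le> 5 * b \<Longrightarrow> du_homogeneous a (inverse L ^ a * Zs ^ b)"
proof -
  have Suc_numerals: "Suc 1 = 2" "Suc 2 = 3" "Suc 3 = 4"
    by simp_all
  show "du_homogeneous 1 (Xc 1)" "du_homogeneous 2 (Xc 2)" "du_homogeneous 3 (Xc 3)"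
    "du_homogeneous 1 Yc"
    unfolding du_homogeneous_def du_Xc_1 du_Xc_2 Suc_numerals
    using Xc_in_Rdeg Yc_in_Rdeg du_Xc_3_in_Rdeg du_Yc_in_Rdeg by blast+
  show "b \<le> a \<Longrightarrow> a \<le> 5 * b \<Longrightarrow> du_homogeneous a (inverse L ^ a * Zs ^ b)"
    unfolding du_homogeneous_def
    using inverse_L_power_Zs_power_in_Rdeg du_inverse_L_power_Zs_power_in_Rdeg by simp
qed

lemma du_homogeneous_monval: "admissible m \<Longrightarrow> du_homogeneous (mdeg m) (monval m)"
proof (cases m)
  case (fields i j k l a b)
  assume "admissible m"
  then have "du_homogeneous (i * 1 + j * 2 + k * 3 + l * 1 + a)
      (Xc 1 ^ i * Xc 2 ^ j * Xc 3 ^ k * Yc ^ l * (inverse L ^ a * Zs ^ b))"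
    using fields by (intro du_homogeneous_mult du_homogeneous_power du_homogeneous_generators) auto
  then show ?thesis
    using fields by (simp add: ac_simps)
qed

lemma Rdeg_subset_Rset: "Rdeg n \<subseteq> Rset"
  unfolding Rdeg_eq_mon_span Rset_eq_mon_span by (auto elim: mon_span_mono)

lemma du_Rdeg: "f \<in> Rdeg n \<Longrightarrow> du f \<in> Rdeg (Suc n)"
  unfolding Rdeg_eq_mon_span using du_homogeneous_monval
  by (elim du_mon_span) (auto simp: du_homogeneous_def Rdeg_eq_mon_span)

lemma du_Rset: "f \<in> Rset \<Longrightarrow> du f \<in> Rset"
proof -
  have "du (monval m) \<in> Rset" if "admissible m" for m
    using du_homogeneous_monval[OF that] Rdeg_subset_Rset unfolding du_homogeneous_def by blast
  then show "f \<in> Rset \<Longrightarrow> du f \<in> Rset"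
    unfolding Rset_eq_mon_span by (elim du_mon_span)
qed

theorem mainTheorem6:
  shows "du (Xc 1) = Xc 2
    \<and> du (Xc 2) = Xc 3
    \<and> (\<forall>a b :: nat. du (inverse L ^ a * Zs ^ b)
           = fps_const ((5 * of_nat b - of_nat a) / 5) * inverse L ^ a * Zs ^ b
             * inverse L * (Zs - 1))
    \<and> du Yc = - 3 * Xc 2 - Yc ^ 2 - Xc 1 ^ 2
           - fps_const (3 / 5) * inverse L ^ 2 * Zs * (Zs - 1)
    \<and> du (Xc 3) = - 4 * Xc 1 * Xc 3 - 3 * Xc 2 ^ 2 - 6 * Xc 1 ^ 2 * Xc 2 - Xc 1 ^ 4
           - fps_const (3 / 5) * inverse L ^ 2 * Zs * (Zs - 1) * (Xc 1 ^ 2 + Xc 2)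
           - fps_const (3 / 25) * inverse L ^ 3 * Zs * (Zs - 1) * (8 * Zs - 3) * Xc 1
           + fps_const (1 / 625) * inverse L ^ 4 * Zs
               * (- 396 * Zs ^ 3 + 714 * Zs ^ 2 - 341 * Zs + 23)
    \<and> du ` Rset \<subseteq> Rset
    \<and> (\<forall>n. du ` Rdeg n \<subseteq> Rdeg (Suc n))"
  using du_Xc_1 du_Xc_2 du_inverse_L_power_Zs_power du_Yc du_Xc_3 du_Rset du_Rdeg by auto

end
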